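(* Take a Moore-Penrose dagger category $(\mathbb{X}, \dagger)$ with a \dag-positive map $\begin{bmatrix} \alpha & \beta \\ \beta^\dagger & \delta \end{bmatrix}$ such that $\alpha$ is an isomorphism. Then $\beta^\dagger \circ \alpha^{-1}$ is its unique conditional generator. Therefore, for every object $X \in \mathbb{X}$, if $F= \left( \begin{bmatrix} f \\ g \end{bmatrix}, \begin{bmatrix} \alpha & \beta \\ \beta^\dagger & \delta \end{bmatrix}, \begin{bmatrix} s \\ t \end{bmatrix} \right)$ is a map in $\mathfrak{G}\left[ (\mathbb{X}, \dagger) \right]_X$, then $F\vert_B = \left( \begin{bmatrix} \beta^\dagger \circ \alpha^\circ & g - \beta^\dagger \circ \alpha^\circ \circ f \end{bmatrix}, \delta - \beta^\dagger \circ \alpha^\circ \circ \beta, t - \beta^\dagger \circ \alpha^\circ \circ s \right)$ is its unique conditional.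
   Context: Here $(\mathbb{X}, \dagger)$ is a dagger additive category (a dagger category enriched in abelian groups with additive dagger and finite biproducts satisfying $\pi_j^\dagger = \iota_j$; maps between biproducts are written as matrices, the dagger acting as conjugate transpose) in which every map $f$ has a Moore-Penrose inverse $f^\circ$, i.e. $f \circ f^\circ \circ f = f$, $f^\circ \circ f \circ f^\circ = f^\circ$, $(f \circ f^\circ)^\dagger = f \circ f^\circ$, $(f^\circ \circ f)^\dagger = f^\circ \circ f$. A map $p$ is $\dagger$-positive if $p = \phi^\dagger \circ \phi$ for some $\phi$. The map $\begin{bmatrix} \alpha & \beta \\ \beta^\dagger & \delta \end{bmatrix}: B \oplus C \to B \oplus C$ has $\alpha: B \to B$, $\beta: C \to B$, $\delta: C \to C$. A conditional generator for it is a map $m: B \to C$ with $m \circ \alpha = \beta^\dagger$ and $\delta - m \circ \beta$ $\dagger$-positive. For an object $X$, the Gauss construction $\mathfrak{G}\left[ (\mathbb{X}, \dagger) \right]_X$ is the Markov category with the objects of $\mathbb{X}$, maps $A \to B$ the triples $(f,p,x)$ with $f: A \to B$, $p: B \to B$ $\dagger$-positive, $x: X \to B$; identities $\mathsf{Id}_A = (\mathsf{id}_A,0,0)$; composition $(g,q,y) \circ (f,p,x) = (g \circ f, q + g \circ p \circ g^\dagger, y + g \circ x)$; $A \otimes B = A \oplus B$, $(f,p,x) \otimes (g,q,y) = \left(f \oplus g, p \oplus q, \begin{bmatrix} x \\ y \end{bmatrix}\right)$; copy $\mathsf{copy}_A = \left(\begin{bmatrix} \mathsf{id}_A \\ \mathsf{id}_A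 \end{bmatrix}, 0, 0\right)$, delete $\mathsf{del}_A = (0,0,0): A \to \mathsf{0}$. In $F: A \to B \otimes C$, $f: A \to B$, $g: A \to C$, $s: X \to B$, $t: X \to C$. A map $G: B \otimes A \to C$ is a conditional of $F$ if $(\mathsf{Id}_B \otimes G) \circ (\mathsf{copy}_B \otimes \mathsf{Id}_A) \circ (\mathsf{Id}_B \otimes \mathsf{del}_C \otimes \mathsf{Id}_A) \circ (F \otimes \mathsf{Id}_A) \circ \mathsf{copy}_A = F$. *)

theory Defs
  imports Main
begin

text \<open>Cmp g f is the composite g after f.
  Zer A B is the zero map A to B, Bip A B the biproduct with injections In1, In2
  and projections Pr1, Pr2, and Zob the zero object (nullary biproduct).\<close>

record ('o, 'm) dac =
  Dom :: "'m \<Rightarrow> 'o"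
  Cod :: "'m \<Rightarrow> 'o"
  Cmp :: "'m \<Rightarrow> 'm \<Rightarrow> 'm"
  Idm :: "'o \<Rightarrow> 'm"
  Dag :: "'m \<Rightarrow> 'm"
  Zer :: "'o \<Rightarrow> 'o \<Rightarrow> 'm"
  Add :: "'m \<Rightarrow> 'm \<Rightarrow> 'm"
  Neg :: "'m \<Rightarrow> 'm"
  Bip :: "'o \<Rightarrow> 'o \<Rightarrow> 'o"
  In1 :: "'o \<Rightarrow> 'o \<Rightarrow> 'm"
  In2 :: "'o \<Rightarrow> 'o \<Rightarrow> 'm"
  Pr1 :: "'o \<Rightarrow> 'o \<Rightarrow> 'm"
  Pr2 :: "'o \<Rightarrow> 'o \<Rightarrow> 'm"
  Zob :: 'o

definition hom :: "('o, 'm) dac \<Rightarrow> 'o \<Rightarrow> 'o \<Rightarrow> 'm set" where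
  "hom K A B = {f. Dom K f = A \<and> Cod K f = B}"

definition Sub :: "('o, 'm) dac \<Rightarrow> 'm \<Rightarrow> 'm \<Rightarrow> 'm" where
  "Sub K f g = Add K f (Neg K g)"

locale dagger_additive_cat =
  fixes K :: "('o, 'm) dac"
  assumes id_hom: "Idm K A \<in> hom K A A"
    and comp_hom: "f \<in> hom K A B \<Longrightarrow> g \<in> hom K B D \<Longrightarrow> Cmp K g f \<in> hom K A D"
    and id_left: "f \<in> hom K A B \<Longrightarrow> Cmp K (Idm K B) f = f"
    and id_right: "f \<in> hom K A B \<Longrightarrow> Cmp K f (Idm K A) = f"
    and comp_assoc: "f \<in> hom K A B \<Longrightarrow> g \<in> hom K B D \<Longrightarrow> h \<in> hom K D E \<Longrightarrow>
        Cmp K h (Cmp K g f) = Cmp K (Cmp K h g) f"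
    and dag_hom: "f \<in> hom K A B \<Longrightarrow> Dag K f \<in> hom K B A"
    and dag_dag: "f \<in> hom K A B \<Longrightarrow> Dag K (Dag K f) = f"
    and dag_id: "Dag K (Idm K A) = Idm K A"
    and dag_comp: "f \<in> hom K A B \<Longrightarrow> g \<in> hom K B D \<Longrightarrow>
        Dag K (Cmp K g f) = Cmp K (Dag K f) (Dag K g)"
    and zer_hom: "Zer K A B \<in> hom K A B"
    and add_hom: "f \<in> hom K A B \<Longrightarrow> g \<in> hom K A B \<Longrightarrow> Add K f g \<in> hom K A B"
    and neg_hom: "f \<in> hom K A B \<Longrightarrow> Neg K f \<in> hom K A B"
    and add_assoc: "f \<in> hom K A B \<Longrightarrow> g \<in> hom K A B \<Longrightarrow> h \<in> hom K A B \<Longrightarrow>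
        Add K (Add K f g) h = Add K f (Add K g h)"
    and add_comm: "f \<in> hom K A B \<Longrightarrow> g \<in> hom K A B \<Longrightarrow> Add K f g = Add K g f"
    and add_zero: "f \<in> hom K A B \<Longrightarrow> Add K f (Zer K A B) = f"
    and add_neg: "f \<in> hom K A B \<Longrightarrow> Add K f (Neg K f) = Zer K A B"
    and comp_add_left: "f \<in> hom K A B \<Longrightarrow> g \<in> hom K A B \<Longrightarrow> h \<in> hom K B D \<Longrightarrow>
        Cmp K h (Add K f g) = Add K (Cmp K h f) (Cmp K h g)"
    and comp_add_right: "f \<in> hom K B D \<Longrightarrow> g \<in> hom K B D \<Longrightarrow> h \<in> hom K A B \<Longrightarrow>
        Cmp K (Add K f g) h = Add K (Cmp K f h) (Cmp K g h)"
    and dag_add: "f \<in> hom K A B \<Longrightarrow> g \<in> hom K A B \<Longrightarrow>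
        Dag K (Add K f g) = Add K (Dag K f) (Dag K g)"
    and in1_hom: "In1 K A B \<in> hom K A (Bip K A B)"
    and in2_hom: "In2 K A B \<in> hom K B (Bip K A B)"
    and pr1_hom: "Pr1 K A B \<in> hom K (Bip K A B) A"
    and pr2_hom: "Pr2 K A B \<in> hom K (Bip K A B) B"
    and pr1_in1: "Cmp K (Pr1 K A B) (In1 K A B) = Idm K A"
    and pr2_in2: "Cmp K (Pr2 K A B) (In2 K A B) = Idm K B"
    and pr1_in2: "Cmp K (Pr1 K A B) (In2 K A B) = Zer K B A"
    and pr2_in1: "Cmp K (Pr2 K A B) (In1 K A B) = Zer K A B"
    and bip_sum: "Add K (Cmp K (In1 K A B) (Pr1 K A B)) (Cmp K (In2 K A B) (Pr2 K A B))
        = Idm K (Bip K A B)"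
    and dag_pr1: "Dag K (Pr1 K A B) = In1 K A B"
    and dag_pr2: "Dag K (Pr2 K A B) = In2 K A B"
    and zero_obj: "Idm K (Zob K) = Zer K (Zob K) (Zob K)"

definition is_mp_inverse :: "('o, 'm) dac \<Rightarrow> 'm \<Rightarrow> 'm \<Rightarrow> bool" where
  "is_mp_inverse K f g \<longleftrightarrow> g \<in> hom K (Cod K f) (Dom K f)
     \<and> Cmp K (Cmp K f g) f = f
     \<and> Cmp K (Cmp K g f) g = g
     \<and> Dag K (Cmp K f g) = Cmp K f g
     \<and> Dag K (Cmp K g f) = Cmp K g f"

locale mp_dagger_additive_cat = dagger_additive_cat +
  assumes mp_exists: "\<exists>g. is_mp_inverse K f g"

text \<open>The Moore-Penrose inverse f\<degree> (unique when it exists).\<close>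
definition mpinv :: "('o, 'm) dac \<Rightarrow> 'm \<Rightarrow> 'm" where
  "mpinv K f = (SOME g. is_mp_inverse K f g)"

definition is_iso :: "('o, 'm) dac \<Rightarrow> 'o \<Rightarrow> 'o \<Rightarrow> 'm \<Rightarrow> bool" where
  "is_iso K A B a \<longleftrightarrow> a \<in> hom K A B \<and>
     (\<exists>b \<in> hom K B A. Cmp K b a = Idm K A \<and> Cmp K a b = Idm K B)"

definition inv_map :: "('o, 'm) dac \<Rightarrow> 'm \<Rightarrow> 'm" where
  "inv_map K a = (SOME b. b \<in> hom K (Cod K a) (Dom K a) \<and>
     Cmp K b a = Idm K (Dom K a) \<and> Cmp K a b = Idm K (Cod K a))"

definition dpos :: "('o, 'm) dac \<Rightarrow> 'o \<Rightarrow> 'm \<Rightarrow> bool" where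
  "dpos K B p \<longleftrightarrow> p \<in> hom K B B \<and> (\<exists>\<phi>. Dom K \<phi> = B \<and> p = Cmp K (Dag K \<phi>) \<phi>)"

definition col :: "('o, 'm) dac \<Rightarrow> 'm \<Rightarrow> 'm \<Rightarrow> 'm" where
  "col K f g = Add K (Cmp K (In1 K (Cod K f) (Cod K g)) f) (Cmp K (In2 K (Cod K f) (Cod K g)) g)"

definition row :: "('o, 'm) dac \<Rightarrow> 'm \<Rightarrow> 'm \<Rightarrow> 'm" where
  "row K h k = Add K (Cmp K h (Pr1 K (Dom K h) (Dom K k))) (Cmp K k (Pr2 K (Dom K h) (Dom K k)))"

text \<open>The 2x2 matrix [[a, b], [c, d]] : A1 \<oplus> A2 \<rightarrow> B1 \<oplus> B2 with
  a : A1 \<rightarrow> B1, b : A2 \<rightarrow> B1, c : A1 \<rightarrow> B2, d : A2 \<rightarrow> B2.\<close>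
definition mat2 :: "('o, 'm) dac \<Rightarrow> 'm \<Rightarrow> 'm \<Rightarrow> 'm \<Rightarrow> 'm \<Rightarrow> 'm" where
  "mat2 K a b c d = col K (row K a b) (row K c d)"

definition dsum :: "('o, 'm) dac \<Rightarrow> 'm \<Rightarrow> 'm \<Rightarrow> 'm" where
  "dsum K f g = mat2 K f (Zer K (Dom K g) (Cod K f)) (Zer K (Dom K f) (Cod K g)) g"

definition cond_gen :: "('o, 'm) dac \<Rightarrow> 'm \<Rightarrow> 'm \<Rightarrow> 'm \<Rightarrow> 'm \<Rightarrow> bool" where
  "cond_gen K \<alpha> \<beta> \<delta> m \<longleftrightarrow> m \<in> hom K (Dom K \<alpha>) (Dom K \<beta>)
     \<and> Cmp K m \<alpha> = Dag K \<beta>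
     \<and> dpos K (Dom K \<beta>) (Sub K \<delta> (Cmp K m \<beta>))"

type_synonym 'm gmap = "'m \<times> 'm \<times> 'm"

definition ghom :: "('o, 'm) dac \<Rightarrow> 'o \<Rightarrow> 'o \<Rightarrow> 'o \<Rightarrow> 'm gmap set" where
  "ghom K X A B = {(f, p, x). f \<in> hom K A B \<and> dpos K B p \<and> x \<in> hom K X B}"

definition gid :: "('o, 'm) dac \<Rightarrow> 'o \<Rightarrow> 'o \<Rightarrow> 'm gmap" where
  "gid K X A = (Idm K A, Zer K A A, Zer K X A)"

definition gcomp :: "('o, 'm) dac \<Rightarrow> 'm gmap \<Rightarrow> 'm gmap \<Rightarrow> 'm gmap" where
  "gcomp K G F = (case G of (g, q, y) \<Rightarrow> case F of (f, p, x) \<Rightarrow>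
     (Cmp K g f, Add K q (Cmp K (Cmp K g p) (Dag K g)), Add K y (Cmp K g x)))"

definition gtens :: "('o, 'm) dac \<Rightarrow> 'm gmap \<Rightarrow> 'm gmap \<Rightarrow> 'm gmap" where
  "gtens K F G = (case F of (f, p, x) \<Rightarrow> case G of (g, q, y) \<Rightarrow>
     (dsum K f g, dsum K p q, col K x y))"

definition gcopy :: "('o, 'm) dac \<Rightarrow> 'o \<Rightarrow> 'o \<Rightarrow> 'm gmap" where
  "gcopy K X A = (col K (Idm K A) (Idm K A), Zer K (Bip K A A) (Bip K A A), Zer K X (Bip K A A))"

definition gdel :: "('o, 'm) dac \<Rightarrow> 'o \<Rightarrow> 'o \<Rightarrow> 'm gmap" where
  "gdel K X A = (Zer K A (Zob K), Zer K (Zob K) (Zob K), Zer K X (Zob K))"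

text \<open>Structural isomorphisms of the (non-strict) monoidal structure, induced by the
  biproduct: right unitor B \<otimes> 0 \<rightarrow> B and associator (A \<otimes> B) \<otimes> D \<rightarrow> A \<otimes> (B \<otimes> D).\<close>
definition gunitr :: "('o, 'm) dac \<Rightarrow> 'o \<Rightarrow> 'o \<Rightarrow> 'm gmap" where
  "gunitr K X B = (Pr1 K B (Zob K), Zer K B B, Zer K X B)"

definition gassoc :: "('o, 'm) dac \<Rightarrow> 'o \<Rightarrow> 'o \<Rightarrow> 'o \<Rightarrow> 'o \<Rightarrow> 'm gmap" where
  "gassoc K X A B D =
     (col K (Cmp K (Pr1 K A B) (Pr1 K (Bip K A B) D))
            (col K (Cmp K (Pr2 K A B) (Pr1 K (Bip K A B) D)) (Pr2 K (Bip K A B) D)),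
      Zer K (Bip K A (Bip K B D)) (Bip K A (Bip K B D)),
      Zer K X (Bip K A (Bip K B D)))"

text \<open>G : B \<otimes> A \<rightarrow> C is a conditional of F : A \<rightarrow> B \<otimes> C if
  (Id_B \<otimes> G) \<circ> (copy_B \<otimes> Id_A) \<circ> (Id_B \<otimes> del_C \<otimes> Id_A) \<circ> (F \<otimes> Id_A) \<circ> copy_A = F,
  with the coherence isomorphisms inserted explicitly.\<close>
definition is_gcond :: "('o, 'm) dac \<Rightarrow> 'o \<Rightarrow> 'o \<Rightarrow> 'o \<Rightarrow> 'o \<Rightarrow> 'm gmap \<Rightarrow> 'm gmap \<Rightarrow> bool" where
  "is_gcond K X A B C F G \<longleftrightarrow> G \<in> ghom K X (Bip K B A) C \<and>
     gcomp K (gtens K (gid K X B) G)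
      (gcomp K (gassoc K X B B A)
       (gcomp K (gtens K (gcopy K X B) (gid K X A))
        (gcomp K (gtens K (gunitr K X B) (gid K X A))
         (gcomp K (gtens K (gtens K (gid K X B) (gdel K X C)) (gid K X A))
          (gcomp K (gtens K F (gid K X A)) (gcopy K X A)))))) = F"

end

theory Submission
  imports Defs
begin

(* A dagger-positive block matrix is a Gram matrix: writing it as \<phi>\<dagger> \<phi> and splitting
   \<phi> = [p1 p2] along B \<oplus> C gives \<alpha> = p1\<dagger> p1, \<beta> = p1\<dagger> p2 and \<delta> = p2\<dagger> p2.
   When \<alpha> is invertible, \<psi> = p2 - p1 \<alpha>\<inverse> \<beta> is orthogonal to p1, so the Schur complement
   \<delta> - \<beta>\<dagger> \<alpha>\<inverse> \<beta> equals \<psi>\<dagger> \<psi> and is dagger-positive. Hence \<beta>\<dagger> \<alpha>\<inverse> is a conditional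
   generator, and the only one, since m \<alpha> = \<beta>\<dagger> determines m.
   In the Gauss construction, the composite defining a conditional G = ([h1 h2], q, y) of F
   evaluates to ([f; h1 f + h2], [[\<alpha>, \<alpha> h1\<dagger>], [h1 \<alpha>, q + h1 \<alpha> h1\<dagger>]], [s; y + h1 s]), so G is a
   conditional of F exactly when h1 is a conditional generator and h2, q, y are the differences
   g - h1 f, \<delta> - h1 \<beta>, t - h1 s. For an isomorphism the Moore-Penrose inverse is the inverse. *)

context dagger_additive_cat
begin

section \<open>Additive dagger calculus\<close>

lemma dom_cod_Idm[simp]: "Dom K (Idm K A) = A" "Cod K (Idm K A) = A"
  using id_hom[of A] by (auto simp: hom_def)
lemma dom_cod_Zer[simp]: "Dom K (Zer K A B) = A" "Cod K (Zer K A B) = B"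
  using zer_hom[of A B] by (auto simp: hom_def)
lemma dom_cod_In1[simp]: "Dom K (In1 K A B) = A" "Cod K (In1 K A B) = Bip K A B"
  using in1_hom[of A B] by (auto simp: hom_def)
lemma dom_cod_In2[simp]: "Dom K (In2 K A B) = B" "Cod K (In2 K A B) = Bip K A B"
  using in2_hom[of A B] by (auto simp: hom_def)
lemma dom_cod_Pr1[simp]: "Dom K (Pr1 K A B) = Bip K A B" "Cod K (Pr1 K A B) = A"
  using pr1_hom[of A B] by (auto simp: hom_def)
lemma dom_cod_Pr2[simp]: "Dom K (Pr2 K A B) = Bip K A B" "Cod K (Pr2 K A B) = B"
  using pr2_hom[of A B] by (auto simp: hom_def)
lemma dom_cod_Dag[simp]: "Dom K (Dag K f) = Cod K f" "Cod K (Dag K f) = Dom K f"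
  using dag_hom[of f "Dom K f" "Cod K f"] by (auto simp: hom_def)
lemma dom_cod_Neg[simp]: "Dom K (Neg K f) = Dom K f" "Cod K (Neg K f) = Cod K f"
  using neg_hom[of f "Dom K f" "Cod K f"] by (auto simp: hom_def)
lemma dom_cod_Cmp[simp]:
  "Cod K f = Dom K g \<Longrightarrow> Dom K (Cmp K g f) = Dom K f"
  "Cod K f = Dom K g \<Longrightarrow> Cod K (Cmp K g f) = Cod K g"
  using comp_hom[of f "Dom K f" "Cod K f" g "Cod K g"] by (auto simp: hom_def)
lemma dom_cod_Add[simp]:
  "Dom K g = Dom K f \<Longrightarrow> Cod K g = Cod K f \<Longrightarrow> Dom K (Add K f g) = Dom K f"
  "Dom K g = Dom K f \<Longrightarrow> Cod K g = Cod K f \<Longrightarrow> Cod K (Add K f g) = Cod K f"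
  using add_hom[of f "Dom K f" "Cod K f" g] by (auto simp: hom_def)

lemma Cmp_Idm_left[simp]: "Cod K f = B \<Longrightarrow> Cmp K (Idm K B) f = f"
  using id_left[of f "Dom K f" B] by (simp add: hom_def)
lemma Cmp_Idm_right[simp]: "Dom K f = A \<Longrightarrow> Cmp K f (Idm K A) = f"
  using id_right[of f A "Cod K f"] by (simp add: hom_def)
lemma Cmp_assoc[simp]: "Cod K f = Dom K g \<Longrightarrow> Cod K g = Dom K h \<Longrightarrow>
    Cmp K (Cmp K h g) f = Cmp K h (Cmp K g f)"
  using comp_assoc[of f "Dom K f" "Cod K f" g "Cod K g" h "Cod K h"] by (simp add: hom_def)
lemma Dag_Dag[simp]: "Dag K (Dag K f) = f"
  using dag_dag[of f "Dom K f" "Cod K f"] by (simp add: hom_def)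
lemma Dag_Cmp[simp]: "Cod K f = Dom K g \<Longrightarrow> Dag K (Cmp K g f) = Cmp K (Dag K f) (Dag K g)"
  using dag_comp[of f "Dom K f" "Cod K f" g "Cod K g"] by (simp add: hom_def)
lemma Cmp_Add_left[simp]: "Dom K g = Dom K f \<Longrightarrow> Cod K g = Cod K f \<Longrightarrow> Cod K f = Dom K h \<Longrightarrow>
    Cmp K h (Add K f g) = Add K (Cmp K h f) (Cmp K h g)"
  using comp_add_left[of f "Dom K f" "Cod K f" g h "Cod K h"] by (simp add: hom_def)
lemma Cmp_Add_right[simp]: "Dom K g = Dom K f \<Longrightarrow> Cod K g = Cod K f \<Longrightarrow> Cod K h = Dom K f \<Longrightarrow>
    Cmp K (Add K f g) h = Add K (Cmp K f h) (Cmp K g h)"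
  using comp_add_right[of f "Dom K f" "Cod K f" g h "Dom K h"] by (simp add: hom_def)
lemma Dag_Add[simp]: "Dom K g = Dom K f \<Longrightarrow> Cod K g = Cod K f \<Longrightarrow>
    Dag K (Add K f g) = Add K (Dag K f) (Dag K g)"
  using dag_add[of f "Dom K f" "Cod K f" g] by (simp add: hom_def)
lemma Add_assoc: "Dom K g = Dom K f \<Longrightarrow> Cod K g = Cod K f \<Longrightarrow> Dom K h = Dom K f \<Longrightarrow>
    Cod K h = Cod K f \<Longrightarrow> Add K (Add K f g) h = Add K f (Add K g h)"
  using add_assoc[of f "Dom K f" "Cod K f" g h] by (simp add: hom_def)
lemma Add_commute: "Dom K g = Dom K f \<Longrightarrow> Cod K g = Cod K f \<Longrightarrow> Add K f g = Add K g f"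
  using add_comm[of f "Dom K f" "Cod K f" g] by (simp add: hom_def)
lemma Add_Zer_right[simp]: "Dom K f = A \<Longrightarrow> Cod K f = B \<Longrightarrow> Add K f (Zer K A B) = f"
  using add_zero[of f A B] by (simp add: hom_def)
lemma Add_Zer_left[simp]: "Dom K f = A \<Longrightarrow> Cod K f = B \<Longrightarrow> Add K (Zer K A B) f = f"
  using Add_Zer_right Add_commute[of "Zer K A B" f] by simp
lemma Add_Neg_right[simp]: "Add K f (Neg K f) = Zer K (Dom K f) (Cod K f)"
  using add_neg[of f "Dom K f" "Cod K f"] by (simp add: hom_def)
lemma Add_Neg_left[simp]: "Add K (Neg K f) f = Zer K (Dom K f) (Cod K f)"
  using Add_Neg_right Add_commute[of "Neg K f" f] by simp

lemmas [simp] = dag_id pr1_in1 pr2_in2 pr1_in2 pr2_in1 dag_pr1 dag_pr2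

lemma Dag_In1[simp]: "Dag K (In1 K A B) = Pr1 K A B"
  using dag_pr1 Dag_Dag by metis
lemma Dag_In2[simp]: "Dag K (In2 K A B) = Pr2 K A B"
  using dag_pr2 Dag_Dag by metis

lemma Pr_In_Cmp[simp]:
  "Cod K f = A \<Longrightarrow> Cmp K (Pr1 K A B) (Cmp K (In1 K A B) f) = f"
  "Cod K g = B \<Longrightarrow> Cmp K (Pr2 K A B) (Cmp K (In2 K A B) g) = g"
  by (simp_all flip: Cmp_assoc)

lemma Add_self_imp_Zer:
  assumes "Dom K x = A" "Cod K x = B" "Add K x x = x"
  shows "x = Zer K A B"
proof -
  have "x = Add K x (Add K x (Neg K x))" using assms(1,2) by simp
  also have "\<dots> = Add K (Add K x x) (Neg K x)" by (rule Add_assoc[symmetric]) simp_all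
  also have "\<dots> = Add K x (Neg K x)" using assms(3) by simp
  also have "\<dots> = Zer K A B" using assms(1,2) by simp
  finally show ?thesis .
qed

lemma Cmp_Zer_right[simp]:
  assumes "Dom K f = B"
  shows "Cmp K f (Zer K A B) = Zer K A (Cod K f)"
proof (rule Add_self_imp_Zer)
  have "Add K (Cmp K f (Zer K A B)) (Cmp K f (Zer K A B)) = Cmp K f (Add K (Zer K A B) (Zer K A B))"
    by (rule Cmp_Add_left[symmetric]) (simp_all add: assms)
  then show "Add K (Cmp K f (Zer K A B)) (Cmp K f (Zer K A B)) = Cmp K f (Zer K A B)" by simp
qed (simp_all add: assms)

lemma Cmp_Zer_left[simp]:
  assumes "Cod K f = A"
  shows "Cmp K (Zer K A B) f = Zer K (Dom K f) B"
proof (rule Add_self_imp_Zer)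
  have "Add K (Cmp K (Zer K A B) f) (Cmp K (Zer K A B) f) = Cmp K (Add K (Zer K A B) (Zer K A B)) f"
    by (rule Cmp_Add_right[symmetric]) (simp_all add: assms)
  then show "Add K (Cmp K (Zer K A B) f) (Cmp K (Zer K A B) f) = Cmp K (Zer K A B) f" by simp
qed (simp_all add: assms)

lemma Dag_Zer[simp]: "Dag K (Zer K A B) = Zer K B A"
proof (rule Add_self_imp_Zer)
  have "Add K (Dag K (Zer K A B)) (Dag K (Zer K A B)) = Dag K (Add K (Zer K A B) (Zer K A B))"
    by (rule Dag_Add[symmetric]) simp_all
  then show "Add K (Dag K (Zer K A B)) (Dag K (Zer K A B)) = Dag K (Zer K A B)" by simp
qed simp_all

lemma Pr_In_Cmp_Zer[simp]:
  "Cod K g = B \<Longrightarrow> Cmp K (Pr1 K A B) (Cmp K (In2 K A B) g) = Zer K (Dom K g) A"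
  "Cod K f = A \<Longrightarrow> Cmp K (Pr2 K A B) (Cmp K (In1 K A B) f) = Zer K (Dom K f) B"
  by (simp_all flip: Cmp_assoc)

lemma Add_left_cancel:
  assumes "Dom K a = Dom K b" "Cod K a = Cod K b" "Dom K c = Dom K b" "Cod K c = Cod K b"
    and "Add K a b = Add K a c"
  shows "b = c"
proof -
  have "b = Add K (Add K (Neg K a) a) b" using assms(1-4) by simp
  also have "\<dots> = Add K (Neg K a) (Add K a b)" by (rule Add_assoc) (simp_all add: assms(1-4))
  also have "\<dots> = Add K (Neg K a) (Add K a c)" by (simp only: assms(5))
  also have "\<dots> = Add K (Add K (Neg K a) a) c" by (rule Add_assoc[symmetric]) (simp_all add: assms(1-4))
  also have "\<dots> = c" using assms(1-4) by simp
  finally show ?thesis .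
qed

lemma Cmp_Neg_left[simp]:
  assumes "Cod K f = Dom K h"
  shows "Cmp K h (Neg K f) = Neg K (Cmp K h f)"
proof (rule Add_left_cancel[of "Cmp K h f"])
  have "Add K (Cmp K h f) (Cmp K h (Neg K f)) = Cmp K h (Add K f (Neg K f))"
    by (rule Cmp_Add_left[symmetric]) (simp_all add: assms)
  then show "Add K (Cmp K h f) (Cmp K h (Neg K f)) = Add K (Cmp K h f) (Neg K (Cmp K h f))"
    using assms by simp
qed (simp_all add: assms)

lemma Cmp_Neg_right[simp]:
  assumes "Cod K h = Dom K f"
  shows "Cmp K (Neg K f) h = Neg K (Cmp K f h)"
proof (rule Add_left_cancel[of "Cmp K f h"])
  have "Add K (Cmp K f h) (Cmp K (Neg K f) h) = Cmp K (Add K f (Neg K f)) h"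
    by (rule Cmp_Add_right[symmetric]) (simp_all add: assms)
  then show "Add K (Cmp K f h) (Cmp K (Neg K f) h) = Add K (Cmp K f h) (Neg K (Cmp K f h))"
    using assms by simp
qed (simp_all add: assms)

lemma Dag_Neg[simp]: "Dag K (Neg K f) = Neg K (Dag K f)"
proof (rule Add_left_cancel[of "Dag K f"])
  have "Add K (Dag K f) (Dag K (Neg K f)) = Dag K (Add K f (Neg K f))"
    by (rule Dag_Add[symmetric]) simp_all
  then show "Add K (Dag K f) (Dag K (Neg K f)) = Add K (Dag K f) (Neg K (Dag K f))" by simp
qed simp_all

lemma dom_cod_Sub[simp]:
  "Dom K g = Dom K f \<Longrightarrow> Cod K g = Cod K f \<Longrightarrow> Dom K (Sub K f g) = Dom K f"
  "Dom K g = Dom K f \<Longrightarrow> Cod K g = Cod K f \<Longrightarrow> Cod K (Sub K f g) = Cod K f"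
  by (simp_all add: Sub_def)

lemma Neg_Zer[simp]: "Neg K (Zer K A B) = Zer K A B"
  using Add_Neg_right[of "Zer K A B"] Add_Zer_left[of "Neg K (Zer K A B)" A B] by simp

lemma Sub_Zer[simp]: "Dom K f = A \<Longrightarrow> Cod K f = B \<Longrightarrow> Sub K f (Zer K A B) = f"
  by (simp add: Sub_def)

lemma Dag_Sub[simp]: "Dom K g = Dom K f \<Longrightarrow> Cod K g = Cod K f \<Longrightarrow>
    Dag K (Sub K f g) = Sub K (Dag K f) (Dag K g)"
  by (simp add: Sub_def)

lemma Cmp_Sub_left[simp]: "Dom K g = Dom K f \<Longrightarrow> Cod K g = Cod K f \<Longrightarrow> Cod K f = Dom K h \<Longrightarrow>
    Cmp K h (Sub K f g) = Sub K (Cmp K h f) (Cmp K h g)"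
  by (simp add: Sub_def)

lemma Cmp_Sub_right[simp]: "Dom K g = Dom K f \<Longrightarrow> Cod K g = Cod K f \<Longrightarrow> Cod K h = Dom K f \<Longrightarrow>
    Cmp K (Sub K f g) h = Sub K (Cmp K f h) (Cmp K g h)"
  by (simp add: Sub_def)

lemma Sub_Add_cancel:
  assumes "Dom K b = Dom K c" "Cod K b = Cod K c"
  shows "Add K (Sub K c b) b = c"
proof -
  have "Add K (Sub K c b) b = Add K c (Add K (Neg K b) b)"
    unfolding Sub_def by (rule Add_assoc) (simp_all add: assms)
  then show ?thesis using assms by simp
qed

lemma Add_eq_iff_eq_Sub:
  assumes "Dom K a = Dom K c" "Cod K a = Cod K c" "Dom K b = Dom K c" "Cod K b = Cod K c"
  shows "Add K a b = c \<longleftrightarrow> a = Sub K c b"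
proof
  assume "Add K a b = c"
  moreover have "Sub K (Add K a b) b = Add K a (Add K b (Neg K b))"
    unfolding Sub_def by (rule Add_assoc) (simp_all add: assms)
  ultimately show "a = Sub K c b" using assms by simp
qed (simp add: Sub_Add_cancel assms)

lemma Add_eq_iff_eq_Sub':
  assumes "Dom K a = Dom K c" "Cod K a = Cod K c" "Dom K b = Dom K c" "Cod K b = Cod K c"
  shows "Add K a b = c \<longleftrightarrow> b = Sub K c a"
  using Add_eq_iff_eq_Sub[of b c a] Add_commute[of a b] assms by simp

section \<open>Biproduct matrices\<close>

lemma dom_cod_col[simp]:
  "Dom K g = Dom K f \<Longrightarrow> Dom K (col K f g) = Dom K f"
  "Dom K g = Dom K f \<Longrightarrow> Cod K (col K f g) = Bip K (Cod K f) (Cod K g)"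
  by (simp_all add: col_def)
lemma dom_cod_row[simp]:
  "Cod K k = Cod K h \<Longrightarrow> Dom K (row K h k) = Bip K (Dom K h) (Dom K k)"
  "Cod K k = Cod K h \<Longrightarrow> Cod K (row K h k) = Cod K h"
  by (simp_all add: row_def)

lemma Pr_col[simp]:
  "Cod K f = B1 \<Longrightarrow> Cod K g = B2 \<Longrightarrow> Dom K g = Dom K f \<Longrightarrow> Cmp K (Pr1 K B1 B2) (col K f g) = f"
  "Cod K f = B1 \<Longrightarrow> Cod K g = B2 \<Longrightarrow> Dom K g = Dom K f \<Longrightarrow> Cmp K (Pr2 K B1 B2) (col K f g) = g"
  by (simp_all add: col_def)

lemma row_In[simp]:
  "Dom K h = A1 \<Longrightarrow> Dom K k = A2 \<Longrightarrow> Cod K k = Cod K h \<Longrightarrow> Cmp K (row K h k) (In1 K A1 A2) = h"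
  "Dom K h = A1 \<Longrightarrow> Dom K k = A2 \<Longrightarrow> Cod K k = Cod K h \<Longrightarrow> Cmp K (row K h k) (In2 K A1 A2) = k"
  by (simp_all add: row_def)

lemma row_In_Cmp[simp]:
  "Dom K h = A1 \<Longrightarrow> Dom K k = A2 \<Longrightarrow> Cod K k = Cod K h \<Longrightarrow> Cod K x = A1 \<Longrightarrow>
     Cmp K (row K h k) (Cmp K (In1 K A1 A2) x) = Cmp K h x"
  "Dom K h = A1 \<Longrightarrow> Dom K k = A2 \<Longrightarrow> Cod K k = Cod K h \<Longrightarrow> Cod K x = A2 \<Longrightarrow>
     Cmp K (row K h k) (Cmp K (In2 K A1 A2) x) = Cmp K k x"
  by (simp_all flip: Cmp_assoc)

lemma col_Cmp[simp]: "Dom K g = Dom K f \<Longrightarrow> Cod K x = Dom K f \<Longrightarrow>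
    Cmp K (col K f g) x = col K (Cmp K f x) (Cmp K g x)"
  by (simp add: col_def)

lemma Cmp_row[simp]: "Cod K h = Dom K x \<Longrightarrow> Cod K k = Dom K x \<Longrightarrow>
    Cmp K x (row K h k) = row K (Cmp K x h) (Cmp K x k)"
  by (simp add: row_def)

lemma row_Cmp_col[simp]:
  "Cod K f = Dom K h \<Longrightarrow> Cod K g = Dom K k \<Longrightarrow> Dom K g = Dom K f \<Longrightarrow> Cod K k = Cod K h \<Longrightarrow>
    Cmp K (row K h k) (col K f g) = Add K (Cmp K h f) (Cmp K k g)"
  unfolding col_def by (simp flip: Cmp_assoc)

lemma Dag_col[simp]: "Dom K g = Dom K f \<Longrightarrow> Dag K (col K f g) = row K (Dag K f) (Dag K g)"
  by (simp add: col_def row_def)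
lemma Dag_row[simp]: "Cod K k = Cod K h \<Longrightarrow> Dag K (row K h k) = col K (Dag K h) (Dag K k)"
  by (simp add: col_def row_def)

lemma col_Pr_eq:
  assumes "Cod K u = Bip K B1 B2"
  shows "col K (Cmp K (Pr1 K B1 B2) u) (Cmp K (Pr2 K B1 B2) u) = u"
proof -
  have "u = Cmp K (Idm K (Bip K B1 B2)) u" using assms by simp
  also have "\<dots> = Cmp K (Add K (Cmp K (In1 K B1 B2) (Pr1 K B1 B2)) (Cmp K (In2 K B1 B2) (Pr2 K B1 B2))) u"
    by (simp only: bip_sum)
  also have "\<dots> = col K (Cmp K (Pr1 K B1 B2) u) (Cmp K (Pr2 K B1 B2) u)"
    using assms by (simp add: col_def)
  finally show ?thesis by simp
qed

lemma row_In_eq: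
  assumes "Dom K u = Bip K A1 A2"
  shows "row K (Cmp K u (In1 K A1 A2)) (Cmp K u (In2 K A1 A2)) = u"
proof -
  have "u = Cmp K u (Idm K (Bip K A1 A2))" using assms by simp
  also have "\<dots> = Cmp K u (Add K (Cmp K (In1 K A1 A2) (Pr1 K A1 A2)) (Cmp K (In2 K A1 A2) (Pr2 K A1 A2)))"
    by (simp only: bip_sum)
  also have "\<dots> = row K (Cmp K u (In1 K A1 A2)) (Cmp K u (In2 K A1 A2))"
    using assms by (simp add: row_def flip: Cmp_assoc)
  finally show ?thesis by simp
qed

lemma Pr_ext:
  assumes "Cod K u = Bip K B1 B2" "Cod K v = Bip K B1 B2"
    and "Cmp K (Pr1 K B1 B2) u = Cmp K (Pr1 K B1 B2) v" "Cmp K (Pr2 K B1 B2) u = Cmp K (Pr2 K B1 B2) v"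
  shows "u = v"
  using col_Pr_eq[OF assms(1)] col_Pr_eq[OF assms(2)] assms(3,4) by metis

lemma In_ext:
  assumes "Dom K u = Bip K A1 A2" "Dom K v = Bip K A1 A2"
    and "Cmp K u (In1 K A1 A2) = Cmp K v (In1 K A1 A2)" "Cmp K u (In2 K A1 A2) = Cmp K v (In2 K A1 A2)"
  shows "u = v"
  using row_In_eq[OF assms(1)] row_In_eq[OF assms(2)] assms(3,4) by metis

lemma col_eq_iff[simp]:
  "Dom K b = Dom K a \<Longrightarrow> Dom K d = Dom K c \<Longrightarrow> Cod K c = Cod K a \<Longrightarrow> Cod K d = Cod K b \<Longrightarrow>
    col K a b = col K c d \<longleftrightarrow> a = c \<and> b = d"
  by (metis Pr_col)
lemma row_eq_iff[simp]:
  "Cod K b = Cod K a \<Longrightarrow> Cod K d = Cod K c \<Longrightarrow> Dom K c = Dom K a \<Longrightarrow> Dom K d = Dom K b \<Longrightarrow>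
    row K a b = row K c d \<longleftrightarrow> a = c \<and> b = d"
  by (metis row_In)

lemma Add_col[simp]:
  "Dom K b = Dom K a \<Longrightarrow> Dom K c = Dom K a \<Longrightarrow> Dom K d = Dom K a \<Longrightarrow>
    Cod K c = Cod K a \<Longrightarrow> Cod K d = Cod K b \<Longrightarrow>
    Add K (col K a b) (col K c d) = col K (Add K a c) (Add K b d)"
  by (rule Pr_ext[of _ "Cod K a" "Cod K b"]) simp_all
lemma Add_row[simp]:
  "Cod K b = Cod K a \<Longrightarrow> Cod K c = Cod K a \<Longrightarrow> Cod K d = Cod K a \<Longrightarrow>
    Dom K c = Dom K a \<Longrightarrow> Dom K d = Dom K b \<Longrightarrow>
    Add K (row K a b) (row K c d) = row K (Add K a c) (Add K b d)"
  by (rule In_ext[of _ "Dom K a" "Dom K b"]) simp_all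
lemma row_col_col[simp]:
  "Dom K b = Dom K a \<Longrightarrow> Dom K d = Dom K c \<Longrightarrow> Cod K c = Cod K a \<Longrightarrow> Cod K d = Cod K b \<Longrightarrow>
    row K (col K a b) (col K c d) = col K (row K a c) (row K b d)"
  by (rule Pr_ext[of _ "Cod K a" "Cod K b"]) simp_all

section \<open>Positive block matrices and conditional generators\<close>

lemma inv_map_inverse:
  assumes "is_iso K A B a"
  shows "inv_map K a \<in> hom K B A" "Cmp K (inv_map K a) a = Idm K A" "Cmp K a (inv_map K a) = Idm K B"
proof -
  have a: "Dom K a = A" "Cod K a = B" using assms by (auto simp: is_iso_def hom_def)
  have "\<exists>b. b \<in> hom K (Cod K a) (Dom K a) \<and> Cmp K b a = Idm K (Dom K a) \<and> Cmp K a b = Idm K (Cod K a)"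
    using assms a by (auto simp: is_iso_def)
  from someI_ex[OF this] show "inv_map K a \<in> hom K B A" "Cmp K (inv_map K a) a = Idm K A"
    "Cmp K a (inv_map K a) = Idm K B"
    unfolding inv_map_def a by auto
qed

lemma mpinv_eq_inv_map:
  assumes "is_iso K A B a"
  shows "mpinv K a = inv_map K a"
proof -
  let ?b = "inv_map K a" and ?g = "mpinv K a"
  have a: "Dom K a = A" "Cod K a = B" using assms by (auto simp: is_iso_def hom_def)
  have b: "Dom K ?b = B" "Cod K ?b = A" "Cmp K ?b a = Idm K A" "Cmp K a ?b = Idm K B"
    using inv_map_inverse[OF assms] by (auto simp: hom_def)
  have "is_mp_inverse K a ?b"
    using a b by (simp add: is_mp_inverse_def hom_def)
  then have "is_mp_inverse K a ?g"
    unfolding mpinv_def by (rule someI)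
  then have tg: "Dom K ?g = B" "Cod K ?g = A" and aga: "Cmp K (Cmp K a ?g) a = a"
    using a by (auto simp: is_mp_inverse_def hom_def)
  have "?g = Cmp K (Cmp K ?b a) (Cmp K ?g (Cmp K a ?b))" unfolding b(3,4) using tg by simp
  also have "\<dots> = Cmp K ?b (Cmp K (Cmp K (Cmp K a ?g) a) ?b)" using a b(1,2) tg by simp
  also have "\<dots> = ?b" unfolding aga using a b by (simp flip: Cmp_assoc)
  finally show ?thesis .
qed

lemma dpos_mat2_GramE:
  assumes "dpos K (Bip K B C) (mat2 K \<alpha> \<beta> \<gamma> \<delta>)"
    and "\<alpha> \<in> hom K B B" "\<beta> \<in> hom K C B" "\<gamma> \<in> hom K B C" "\<delta> \<in> hom K C C"
  obtains p1 p2 where "Dom K p1 = B" "Dom K p2 = C" "Cod K p2 = Cod K p1"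
    "\<alpha> = Cmp K (Dag K p1) p1" "\<beta> = Cmp K (Dag K p1) p2"
    "\<gamma> = Cmp K (Dag K p2) p1" "\<delta> = Cmp K (Dag K p2) p2"
proof -
  obtain \<phi> where \<phi>: "Dom K \<phi> = Bip K B C" and \<Sigma>: "mat2 K \<alpha> \<beta> \<gamma> \<delta> = Cmp K (Dag K \<phi>) \<phi>"
    using assms(1) by (auto simp: dpos_def)
  have "Cmp K (Pr1 K B C) (Cmp K (mat2 K \<alpha> \<beta> \<gamma> \<delta>) (In1 K B C)) = \<alpha>"
    "Cmp K (Pr1 K B C) (Cmp K (mat2 K \<alpha> \<beta> \<gamma> \<delta>) (In2 K B C)) = \<beta>"
    "Cmp K (Pr2 K B C) (Cmp K (mat2 K \<alpha> \<beta> \<gamma> \<delta>) (In1 K B C)) = \<gamma>"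
    "Cmp K (Pr2 K B C) (Cmp K (mat2 K \<alpha> \<beta> \<gamma> \<delta>) (In2 K B C)) = \<delta>"
    using assms(2-5) by (simp_all add: mat2_def hom_def)
  then show ?thesis
    using \<phi> by (intro that[of "Cmp K \<phi> (In1 K B C)" "Cmp K \<phi> (In2 K B C)"]) (simp_all add: \<Sigma>)
qed

lemma dpos_mat2_corner_self_adjoint:
  assumes "dpos K (Bip K B C) (mat2 K \<alpha> \<beta> \<gamma> \<delta>)"
    and "\<alpha> \<in> hom K B B" "\<beta> \<in> hom K C B" "\<gamma> \<in> hom K B C" "\<delta> \<in> hom K C C"
  shows "Dag K \<alpha> = \<alpha>"
proof -
  obtain p1 where "\<alpha> = Cmp K (Dag K p1) p1"
    using dpos_mat2_GramE[OF assms] by metis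
  then show ?thesis by simp
qed

lemma dpos_Schur_complement:
  assumes "dpos K (Bip K B C) (mat2 K \<alpha> \<beta> (Dag K \<beta>) \<delta>)"
    and "\<alpha> \<in> hom K B B" "\<beta> \<in> hom K C B" "\<delta> \<in> hom K C C" and "is_iso K B B \<alpha>"
  shows "dpos K C (Sub K \<delta> (Cmp K (Cmp K (Dag K \<beta>) (inv_map K \<alpha>)) \<beta>))"
proof -
  define n where "n = Cmp K (inv_map K \<alpha>) \<beta>"
  have \<beta>: "Dom K \<beta> = C" "Cod K \<beta> = B" using assms(3) by (simp_all add: hom_def)
  have \<alpha>: "Dom K \<alpha> = B" "Cod K \<alpha> = B" using assms(2) by (simp_all add: hom_def)
  note inv = inv_map_inverse[OF assms(5), unfolded hom_def, simplified]
  have n: "Dom K n = C" "Cod K n = B" unfolding n_def using inv \<beta> by simp_all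
  have \<alpha>n: "Cmp K \<alpha> n = \<beta>" unfolding n_def using inv \<alpha> \<beta> by (simp flip: Cmp_assoc)
  obtain p1 p2 where p: "Dom K p1 = B" "Dom K p2 = C" "Cod K p2 = Cod K p1"
    and \<alpha>p: "\<alpha> = Cmp K (Dag K p1) p1" and \<beta>p: "\<beta> = Cmp K (Dag K p1) p2"
    and \<beta>'p: "Dag K \<beta> = Cmp K (Dag K p2) p1" and \<delta>p: "\<delta> = Cmp K (Dag K p2) p2"
    using dpos_mat2_GramE[OF assms(1-3) dag_hom[OF assms(3)] assms(4)] by blast
  define \<psi> where "\<psi> = Sub K p2 (Cmp K p1 n)"
  have \<psi>: "Dom K \<psi> = C" "Cod K \<psi> = Cod K p1" unfolding \<psi>_def using p n by simp_all
  have orth: "Cmp K (Dag K p1) \<psi> = Zer K C B"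
  proof -
    have "Cmp K (Dag K p1) \<psi> = Sub K \<beta> (Cmp K \<alpha> n)"
      unfolding \<psi>_def \<alpha>p \<beta>p using p n by simp
    also have "\<dots> = Zer K C B" unfolding \<alpha>n using \<beta> by (simp add: Sub_def)
    finally show ?thesis .
  qed
  have "Dag K \<psi> = Sub K (Dag K p2) (Cmp K (Dag K n) (Dag K p1))"
    unfolding \<psi>_def using p n by simp
  then have "Cmp K (Dag K \<psi>) \<psi> = Sub K (Cmp K (Dag K p2) \<psi>) (Cmp K (Dag K n) (Cmp K (Dag K p1) \<psi>))"
    using p n \<psi> by simp
  also have "\<dots> = Cmp K (Dag K p2) \<psi>" unfolding orth using p n \<psi> by simp
  also have "\<dots> = Sub K \<delta> (Cmp K (Cmp K (Dag K \<beta>) (inv_map K \<alpha>)) \<beta>)"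
    unfolding \<psi>_def \<delta>p \<beta>'p n_def using p n \<beta> inv by simp
  finally have "Sub K \<delta> (Cmp K (Cmp K (Dag K \<beta>) (inv_map K \<alpha>)) \<beta>) = Cmp K (Dag K \<psi>) \<psi>" ..
  moreover have "Sub K \<delta> (Cmp K (Cmp K (Dag K \<beta>) (inv_map K \<alpha>)) \<beta>) \<in> hom K C C"
    using assms(4) inv \<beta> by (simp add: hom_def)
  ultimately show ?thesis
    unfolding dpos_def using \<psi>(1) by blast
qed

lemma cond_gen_iff:
  assumes "dpos K (Bip K B C) (mat2 K \<alpha> \<beta> (Dag K \<beta>) \<delta>)"
    and "\<alpha> \<in> hom K B B" "\<beta> \<in> hom K C B" "\<delta> \<in> hom K C C" and "is_iso K B B \<alpha>"
  shows "cond_gen K \<alpha> \<beta> \<delta> m \<longleftrightarrow> m = Cmp K (Dag K \<beta>) (inv_map K \<alpha>)"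
proof -
  have \<alpha>: "Dom K \<alpha> = B" "Cod K \<alpha> = B" and \<beta>: "Dom K \<beta> = C" "Cod K \<beta> = B"
    using assms(2,3) by (simp_all add: hom_def)
  note inv = inv_map_inverse[OF assms(5), unfolded hom_def, simplified]
  show ?thesis
  proof
    assume "cond_gen K \<alpha> \<beta> \<delta> m"
    then have m: "Dom K m = B" "Cod K m = C" and m\<alpha>: "Cmp K m \<alpha> = Dag K \<beta>"
      using \<alpha> \<beta> by (auto simp: cond_gen_def hom_def)
    have "m = Cmp K m (Cmp K \<alpha> (inv_map K \<alpha>))" using inv m by simp
    also have "\<dots> = Cmp K (Dag K \<beta>) (inv_map K \<alpha>)" using inv m \<alpha> by (simp flip: m\<alpha>)
    finally show "m = Cmp K (Dag K \<beta>) (inv_map K \<alpha>)" .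
  next
    assume m: "m = Cmp K (Dag K \<beta>) (inv_map K \<alpha>)"
    have "Cmp K m \<alpha> = Dag K \<beta>" unfolding m using inv \<alpha> \<beta> by simp
    then show "cond_gen K \<alpha> \<beta> \<delta> m"
      using dpos_Schur_complement[OF assms] inv \<alpha> \<beta> unfolding cond_gen_def m
      by (simp add: hom_def)
  qed
qed

section \<open>Conditionals in the Gauss construction\<close>

lemma gauss_conditional_composite:
  assumes "f \<in> hom K A B" "g \<in> hom K A C" "s \<in> hom K X B" "t \<in> hom K X C"
    and "a \<in> hom K B B" "b \<in> hom K C B" "c \<in> hom K B C" "d \<in> hom K C C"
    and "h1 \<in> hom K B C" "h2 \<in> hom K A C" "q \<in> hom K C C" "y \<in> hom K X C"
  shows "gcomp K (gtens K (gid K X B) (row K h1 h2, q, y))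
      (gcomp K (gassoc K X B B A)
       (gcomp K (gtens K (gcopy K X B) (gid K X A))
        (gcomp K (gtens K (gunitr K X B) (gid K X A))
         (gcomp K (gtens K (gtens K (gid K X B) (gdel K X C)) (gid K X A))
          (gcomp K (gtens K (col K f g, mat2 K a b c d, col K s t) (gid K X A)) (gcopy K X A))))))
    = (col K f (Add K (Cmp K h1 f) h2),
       mat2 K a (Cmp K a (Dag K h1)) (Cmp K h1 a) (Add K q (Cmp K h1 (Cmp K a (Dag K h1)))),
       col K s (Add K y (Cmp K h1 s)))"
proof -
  have "Dom K f = A" "Cod K f = B" "Dom K g = A" "Cod K g = C" "Dom K s = X" "Cod K s = B"
    "Dom K t = X" "Cod K t = C" "Dom K a = B" "Cod K a = B" "Dom K b = C" "Cod K b = B"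
    "Dom K c = B" "Cod K c = C" "Dom K d = C" "Cod K d = C" "Dom K h1 = B" "Cod K h1 = C"
    "Dom K h2 = A" "Cod K h2 = C" "Dom K q = C" "Cod K q = C" "Dom K y = X" "Cod K y = C"
    using assms by (simp_all add: hom_def)
  then show ?thesis
    by (simp add: gcomp_def gtens_def gid_def gcopy_def gdel_def gunitr_def gassoc_def dsum_def
        mat2_def)
qed

lemma is_gcond_row_iff:
  assumes f: "f \<in> hom K A B" and g: "g \<in> hom K A C" and s: "s \<in> hom K X B" and t: "t \<in> hom K X C"
    and \<alpha>: "\<alpha> \<in> hom K B B" and \<beta>: "\<beta> \<in> hom K C B" and \<delta>: "\<delta> \<in> hom K C C" and "Dag K \<alpha> = \<alpha>"
    and h1: "h1 \<in> hom K B C" and h2: "h2 \<in> hom K A C" and q: "q \<in> hom K C C" and y: "y \<in> hom K X C"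
  shows "is_gcond K X A B C (col K f g, mat2 K \<alpha> \<beta> (Dag K \<beta>) \<delta>, col K s t) (row K h1 h2, q, y)
    \<longleftrightarrow> cond_gen K \<alpha> \<beta> \<delta> h1 \<and> h2 = Sub K g (Cmp K h1 f) \<and> q = Sub K \<delta> (Cmp K h1 \<beta>)
        \<and> y = Sub K t (Cmp K h1 s)"
proof -
  have types: "Dom K f = A" "Cod K f = B" "Dom K g = A" "Cod K g = C" "Dom K s = X" "Cod K s = B"
    "Dom K t = X" "Cod K t = C" "Dom K \<alpha> = B" "Cod K \<alpha> = B" "Dom K \<beta> = C" "Cod K \<beta> = B"
    "Dom K \<delta> = C" "Cod K \<delta> = C" "Dom K h1 = B" "Cod K h1 = C" "Dom K h2 = A" "Cod K h2 = C"
    "Dom K q = C" "Cod K q = C" "Dom K y = X" "Cod K y = C"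
    using assms by (simp_all add: hom_def)
  have "is_gcond K X A B C (col K f g, mat2 K \<alpha> \<beta> (Dag K \<beta>) \<delta>, col K s t) (row K h1 h2, q, y)
    \<longleftrightarrow> dpos K C q \<and> Add K (Cmp K h1 f) h2 = g
      \<and> Cmp K \<alpha> (Dag K h1) = \<beta> \<and> Cmp K h1 \<alpha> = Dag K \<beta>
      \<and> Add K q (Cmp K h1 (Cmp K \<alpha> (Dag K h1))) = \<delta> \<and> Add K y (Cmp K h1 s) = t"
    unfolding is_gcond_def gauss_conditional_composite[OF f g s t \<alpha> \<beta> dag_hom[OF \<beta>] \<delta> h1 h2 q y]
    using types by (simp add: ghom_def hom_def mat2_def)
  also have "\<dots> \<longleftrightarrow> dpos K C q \<and> h2 = Sub K g (Cmp K h1 f)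
      \<and> Cmp K h1 \<alpha> = Dag K \<beta> \<and> q = Sub K \<delta> (Cmp K h1 \<beta>) \<and> y = Sub K t (Cmp K h1 s)"
  proof -
    have "Add K (Cmp K h1 f) h2 = g \<longleftrightarrow> h2 = Sub K g (Cmp K h1 f)"
      by (rule Add_eq_iff_eq_Sub') (simp_all add: types)
    moreover have "Add K y (Cmp K h1 s) = t \<longleftrightarrow> y = Sub K t (Cmp K h1 s)"
      by (rule Add_eq_iff_eq_Sub) (simp_all add: types)
    moreover have "Cmp K \<alpha> (Dag K h1) = \<beta> \<and> Cmp K h1 \<alpha> = Dag K \<beta>
        \<and> Add K q (Cmp K h1 (Cmp K \<alpha> (Dag K h1))) = \<delta>
      \<longleftrightarrow> Cmp K h1 \<alpha> = Dag K \<beta> \<and> q = Sub K \<delta> (Cmp K h1 \<beta>)"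
    proof (cases "Cmp K h1 \<alpha> = Dag K \<beta>")
      case True
      then have "Cmp K \<alpha> (Dag K h1) = \<beta>"
        using types \<open>Dag K \<alpha> = \<alpha>\<close> by (metis Dag_Cmp Dag_Dag)
      then show ?thesis
        using True Add_eq_iff_eq_Sub[of q \<delta> "Cmp K h1 \<beta>"] types by simp
    qed simp
    ultimately show ?thesis by argo
  qed
  finally show ?thesis
    unfolding cond_gen_def types(9,11) using h1 by argo
qed

lemma is_gcond_iff_cond_gen:
  assumes f: "f \<in> hom K A B" and g: "g \<in> hom K A C" and s: "s \<in> hom K X B" and t: "t \<in> hom K X C"
    and \<alpha>: "\<alpha> \<in> hom K B B" and \<beta>: "\<beta> \<in> hom K C B" and \<delta>: "\<delta> \<in> hom K C C"
    and self_adjoint: "Dag K \<alpha> = \<alpha>"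
  shows "is_gcond K X A B C (col K f g, mat2 K \<alpha> \<beta> (Dag K \<beta>) \<delta>, col K s t) G
    \<longleftrightarrow> (\<exists>m. cond_gen K \<alpha> \<beta> \<delta> m
          \<and> G = (row K m (Sub K g (Cmp K m f)), Sub K \<delta> (Cmp K m \<beta>), Sub K t (Cmp K m s)))"
proof
  assume cond: "is_gcond K X A B C (col K f g, mat2 K \<alpha> \<beta> (Dag K \<beta>) \<delta>, col K s t) G"
  obtain h q y where G: "G = (h, q, y)" and h: "h \<in> hom K (Bip K B A) C"
    and q: "q \<in> hom K C C" and y: "y \<in> hom K X C"
    using cond by (auto simp: is_gcond_def ghom_def dpos_def)
  define h1 where "h1 = Cmp K h (In1 K B A)"
  define h2 where "h2 = Cmp K h (In2 K B A)"
  have h1: "h1 \<in> hom K B C" and h2: "h2 \<in> hom K A C"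
    unfolding h1_def h2_def using h by (simp_all add: hom_def)
  have hrow: "h = row K h1 h2"
    unfolding h1_def h2_def by (rule row_In_eq[symmetric]) (use h in \<open>simp add: hom_def\<close>)
  from cond[unfolded G hrow] have "cond_gen K \<alpha> \<beta> \<delta> h1 \<and> h2 = Sub K g (Cmp K h1 f)
      \<and> q = Sub K \<delta> (Cmp K h1 \<beta>) \<and> y = Sub K t (Cmp K h1 s)"
    using is_gcond_row_iff[OF f g s t \<alpha> \<beta> \<delta> self_adjoint h1 h2 q y] by blast
  then show "\<exists>m. cond_gen K \<alpha> \<beta> \<delta> m
      \<and> G = (row K m (Sub K g (Cmp K m f)), Sub K \<delta> (Cmp K m \<beta>), Sub K t (Cmp K m s))"
    unfolding G hrow by blast
next
  assume "\<exists>m. cond_gen K \<alpha> \<beta> \<delta> m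
      \<and> G = (row K m (Sub K g (Cmp K m f)), Sub K \<delta> (Cmp K m \<beta>), Sub K t (Cmp K m s))"
  then obtain m where m: "cond_gen K \<alpha> \<beta> \<delta> m"
    and G: "G = (row K m (Sub K g (Cmp K m f)), Sub K \<delta> (Cmp K m \<beta>), Sub K t (Cmp K m s))"
    by blast
  have "m \<in> hom K B C" using m \<alpha> \<beta> by (simp add: cond_gen_def hom_def)
  moreover have "Sub K g (Cmp K m f) \<in> hom K A C" "Sub K \<delta> (Cmp K m \<beta>) \<in> hom K C C"
    "Sub K t (Cmp K m s) \<in> hom K X C"
    using calculation f g s t \<beta> \<delta> by (simp_all add: hom_def)
  ultimately show "is_gcond K X A B C (col K f g, mat2 K \<alpha> \<beta> (Dag K \<beta>) \<delta>, col K s t) G"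
    unfolding G using is_gcond_row_iff[OF f g s t \<alpha> \<beta> \<delta> self_adjoint] m by blast
qed

end

theorem mainTheorem15:
  fixes K :: "('o, 'm) dac" and B C :: 'o and \<alpha> \<beta> \<delta> :: 'm
  assumes "mp_dagger_additive_cat K"
    and "\<alpha> \<in> hom K B B" and "\<beta> \<in> hom K C B" and "\<delta> \<in> hom K C C"
    and "dpos K (Bip K B C) (mat2 K \<alpha> \<beta> (Dag K \<beta>) \<delta>)"
    and "is_iso K B B \<alpha>"
  shows "(cond_gen K \<alpha> \<beta> \<delta> (Cmp K (Dag K \<beta>) (inv_map K \<alpha>))
          \<and> (\<forall>m. cond_gen K \<alpha> \<beta> \<delta> m \<longrightarrow> m = Cmp K (Dag K \<beta>) (inv_map K \<alpha>)))
       \<and> (\<forall>X A f g s t. f \<in> hom K A B \<and> g \<in> hom K A C \<and> s \<in> hom K X B \<and> t \<in> hom K X C \<longrightarrow>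
           (let F = (col K f g, mat2 K \<alpha> \<beta> (Dag K \<beta>) \<delta>, col K s t);
                m = Cmp K (Dag K \<beta>) (mpinv K \<alpha>);
                H = (row K m (Sub K g (Cmp K m f)), Sub K \<delta> (Cmp K m \<beta>), Sub K t (Cmp K m s))
            in is_gcond K X A B C F H \<and> (\<forall>G. is_gcond K X A B C F G \<longrightarrow> G = H)))"
proof -
  interpret mp_dagger_additive_cat K by (rule assms(1))
  let ?m = "Cmp K (Dag K \<beta>) (inv_map K \<alpha>)"
  have cond_gen: "cond_gen K \<alpha> \<beta> \<delta> m \<longleftrightarrow> m = ?m" for m
    using cond_gen_iff[OF assms(5,2-4,6)] .
  have "Dag K \<alpha> = \<alpha>"
    using dpos_mat2_corner_self_adjoint[OF assms(5,2,3) dag_hom[OF assms(3)] assms(4)] .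
  then have conditional: "is_gcond K X A B C (col K f g, mat2 K \<alpha> \<beta> (Dag K \<beta>) \<delta>, col K s t) G
      \<longleftrightarrow> G = (row K ?m (Sub K g (Cmp K ?m f)), Sub K \<delta> (Cmp K ?m \<beta>), Sub K t (Cmp K ?m s))"
    if "f \<in> hom K A B" "g \<in> hom K A C" "s \<in> hom K X B" "t \<in> hom K X C" for X A f g s t G
    using is_gcond_iff_cond_gen[OF that assms(2-4)] by (simp add: cond_gen)
  show ?thesis
    unfolding Let_def mpinv_eq_inv_map[OF assms(6)] using conditional cond_gen by auto
qed
end
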